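(* Let $M,N\in\Lambda^{001}$. If for every $d\in\mathbf N$ there exists a $d$-positive resource term $s_d\in\mathcal T(M)\cap\mathcal T(N)$, then $M=N$.
   Context: $\Lambda^{001}$: possibly infinite λ-terms (trees of variables, abstractions $\lambda x.M$ and applications $(M)N$) whose infinite branches all enter infinitely often the argument position $N$ of an application, up to α-equivalence. Resource terms: $s::=x\mid\lambda x.s\mid\langle s\rangle\bar t$, with $\bar t=[t_1,\dots,t_n]$ a finite multiset of resource terms. Taylor approximation $\ltimes$ is inductive: $x\ltimes x$; $s\ltimes M\Rightarrow\lambda x.s\ltimes\lambda x.M$; ($s\ltimes M$ and $t_i\ltimes N$ for all $i$) $\Rightarrow\langle s\rangle[t_1,\dots,t_n]\ltimes(M)N$; $\mathcal T(M)=\{s : s\ltimes M\}$. $d$-positive resource terms: every resource term is 0-positive; for $d\ge1$, the $d$-positive terms are generated by $s::=x\mid\lambda x.s\mid\langle s\rangle\bar t$ where $s$ is $d$-positive and $\bar t$ is a non-empty multiset of $(d-1)$-positive terms. *)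

theory Defs
  imports Main "HOL-Library.Multiset"
begin

text \<open>Possibly infinite lambda-terms, in de Bruijn notation (so alpha-equivalence is equality).\<close>
codatatype lterm = Var nat | Lam lterm | App lterm lterm

inductive reach :: "lterm \<Rightarrow> lterm \<Rightarrow> bool" where
  reach_refl: "reach M M"
| reach_lam: "reach M (Lam N) \<Longrightarrow> reach M N"
| reach_fun: "reach M (App N P) \<Longrightarrow> reach M N"
| reach_arg: "reach M (App N P) \<Longrightarrow> reach M P"

inductive finite_spine :: "lterm \<Rightarrow> bool" where
  "finite_spine (Var n)"
| "finite_spine M \<Longrightarrow> finite_spine (Lam M)"
| "finite_spine M \<Longrightarrow> finite_spine (App M N)"

text \<open>Lambda^{001}: every infinite branch enters argument positions infinitely often,
  i.e. no subterm has an infinite spine.\<close>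
definition Lambda001 :: "lterm \<Rightarrow> bool" where
  "Lambda001 M \<longleftrightarrow> (\<forall>N. reach M N \<longrightarrow> finite_spine N)"

datatype rterm = RVar nat | RLam rterm | RApp rterm "rterm multiset"

inductive taylor :: "rterm \<Rightarrow> lterm \<Rightarrow> bool" where
  "taylor (RVar x) (Var x)"
| "taylor s M \<Longrightarrow> taylor (RLam s) (Lam M)"
| "taylor s M \<Longrightarrow> (\<forall>t\<in>#ts. taylor t N) \<Longrightarrow> taylor (RApp s ts) (App M N)"

inductive positive :: "nat \<Rightarrow> rterm \<Rightarrow> bool" where
  "positive 0 s"
| "positive (Suc d) (RVar x)"
| "positive (Suc d) s \<Longrightarrow> positive (Suc d) (RLam s)"
| "positive (Suc d) s \<Longrightarrow> ts \<noteq> {#} \<Longrightarrow> (\<forall>t\<in>#ts. positive d t) \<Longrightarrow> positive (Suc d) (RApp s ts)"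

end

theory Submission
  imports Defs
begin

text \<open>Sharing a d-positive Taylor approximant for every d is a bisimulation:
  a shared approximant forces the same head constructor, and positivity is inherited by bodies and function parts at the same depth and, since argument
  multisets are non-empty, by some argument at depth d - 1. Coinduction then gives M = N.
  No finiteness of spines is needed.\<close>

definition positively_joinable :: "lterm \<Rightarrow> lterm \<Rightarrow> bool" where
  "positively_joinable M N \<longleftrightarrow> (\<forall>d. \<exists>s. positive d s \<and> taylor s M \<and> taylor s N)"

lemma taylor_Var_iff: "taylor s (Var x) \<longleftrightarrow> s = RVar x"
  by (auto elim: taylor.cases intro: taylor.intros)

lemma taylor_Lam_iff: "taylor s (Lam M) \<longleftrightarrow> (\<exists>t. s = RLam t \<and> taylor t M)"
  by (auto elim: taylor.cases intro: taylor.intros)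

lemma taylor_App_iff:
  "taylor s (App M N) \<longleftrightarrow> (\<exists>t ts. s = RApp t ts \<and> taylor t M \<and> (\<forall>u\<in>#ts. taylor u N))"
  by (auto elim: taylor.cases intro: taylor.intros)

lemma positive_RLamD: "positive d (RLam s) \<Longrightarrow> positive d s"
  by (cases d) (auto elim: positive.cases intro: positive.intros)

lemma positive_RAppD: "positive d (RApp s ts) \<Longrightarrow> positive d s"
  by (cases d) (auto elim: positive.cases intro: positive.intros)

lemma positive_Suc_RApp_arg: "positive (Suc d) (RApp s ts) \<Longrightarrow> \<exists>t\<in>#ts. positive d t"
  by (erule positive.cases) (auto elim: multiset_nonemptyE)

lemma taylor_same_head:
  assumes "taylor s M" and "taylor s N"
  shows "(\<exists>x. M = Var x \<and> N = Var x) \<or> (\<exists>M' N'. M = Lam M' \<and> N = Lam N')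
    \<or> (\<exists>M1 M2 N1 N2. M = App M1 M2 \<and> N = App N1 N2)"
  using assms by (cases s) (auto elim: taylor.cases)

lemma positively_joinable_Lam:
  assumes "positively_joinable (Lam M) (Lam N)"
  shows "positively_joinable M N"
  unfolding positively_joinable_def
proof
  fix d
  from assms obtain s where "positive d s" "taylor s (Lam M)" "taylor s (Lam N)"
    unfolding positively_joinable_def by blast
  then show "\<exists>t. positive d t \<and> taylor t M \<and> taylor t N"
    by (auto simp: taylor_Lam_iff dest: positive_RLamD)
qed

lemma positively_joinable_App_fun:
  assumes "positively_joinable (App M1 M2) (App N1 N2)"
  shows "positively_joinable M1 N1"
  unfolding positively_joinable_def
proof
  fix d
  from assms obtain s where "positive d s" "taylor s (App M1 M2)" "taylor s (App N1 N2)"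
    unfolding positively_joinable_def by blast
  then show "\<exists>t. positive d t \<and> taylor t M1 \<and> taylor t N1"
    by (auto simp: taylor_App_iff dest: positive_RAppD)
qed

lemma positively_joinable_App_arg:
  assumes "positively_joinable (App M1 M2) (App N1 N2)"
  shows "positively_joinable M2 N2"
  unfolding positively_joinable_def
proof
  fix d
  from assms obtain s where s: "positive (Suc d) s" "taylor s (App M1 M2)" "taylor s (App N1 N2)"
    unfolding positively_joinable_def by blast
  then obtain t ts where ts: "s = RApp t ts" "\<forall>u\<in>#ts. taylor u M2" "\<forall>u\<in>#ts. taylor u N2"
    by (auto simp: taylor_App_iff)
  with s(1) obtain u where "u \<in># ts" "positive d u"
    using positive_Suc_RApp_arg by blast
  with ts show "\<exists>u. positive d u \<and> taylor u M2 \<and> taylor u N2" by blast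
qed

lemma positively_joinable_eq:
  assumes "positively_joinable M N"
  shows "M = N"
  using assms
proof (coinduction arbitrary: M N rule: lterm.coinduct)
  case (Eq_lterm M N)
  then obtain s where "taylor s M" "taylor s N"
    unfolding positively_joinable_def by blast
  with taylor_same_head Eq_lterm show ?case
    by (fastforce dest: positively_joinable_Lam positively_joinable_App_fun
        positively_joinable_App_arg)
qed

theorem mainTheorem19:
  assumes "Lambda001 M" and "Lambda001 N"
    and "\<forall>d. \<exists>s. positive d s \<and> taylor s M \<and> taylor s N"
  shows "M = N"
  using assms(3) by (intro positively_joinable_eq) (simp add: positively_joinable_def)

end
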